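(* Let $(\mathcal{X}_1,\Phi_1)$ be a connected matroid that is even representable but not almost odd representable, and let $(\mathcal{X}_2,\Phi_2)$ be a connected matroid that is odd representable but not almost even representable, where $\mathcal{X}_1\cap\mathcal{X}_2=\emptyset$. Let $(\mathcal{X},\Phi)$ be their direct sum: $\mathcal{X}=\mathcal{X}_1\cup\mathcal{X}_2$ and $\Phi(\mathcal{A})=\Phi_1(\mathcal{A}\cap\mathcal{X}_1)+\Phi_2(\mathcal{A}\cap\mathcal{X}_2)$ for all $\mathcal{A}\subseteq\mathcal{X}$. Let $0<\epsilon\le\min(\Phi_1(\mathcal{X}_1),\Phi_2(\mathcal{X}_2))$ and define $\Phi^\epsilon(\mathcal{A})=\min\big(\Phi(\mathcal{A}),\ \Phi(\mathcal{X})-\epsilon\big)$ for all $\mathcal{A}\subseteq\mathcal{X}$. Then $(\mathcal{X},\Phi^\epsilon)$ is not cc-representable.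
   Context: A polymatroid $(\mathcal{X},\mathbf{h})$ is a finite ground set $\mathcal{X}=\{X_1,\dots,X_n\}$ with $\mathbf{h}:2^{\mathcal{X}}\to\mathbb{R}_{\ge0}$ satisfying $\mathbf{h}(\emptyset)=0$, monotonicity and submodularity; a matroid additionally has integer values with $\mathbf{h}(\mathcal{A})\le|\mathcal{A}|$. A matroid is connected if every two elements lie in a common circuit. The polymatroid is $q$-representable if there exist subspaces $V_1,\dots,V_n$ of a vector space over $\mathbb{F}_q$ with $\mathbf{h}(\{X_i:i\in\alpha\})=\dim\langle V_i:i\in\alpha\rangle$ for all $\alpha$; representable if $q$-representable for some $q$; even representable if $2^m$-representable for some positive integer $m$; odd representable if $p^m$-representable for some odd prime $p$ and positive integer $m$. Rank functions are vectors in $\mathbb{R}^{2^{|\mathcal{X}|}}$. A rank function is almost even (resp. almost odd) representable if it equals $\lim_{i\to\infty}c_i\mathbf{g}_i$ for some even (resp. odd) representable rank functions $\mathbf{g}_i$ on the same ground set and positive reals $c_i$. It is cc-representable if it lies in the closure of the minimal convex cone containing all representable rank functions on $\mathcal{X}$. *)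

theory Defs
  imports Complex_Main "HOL-Algebra.Ring" "HOL-Computational_Algebra.Primes"
begin

text \<open>A rank function on the finite ground set X is a function on sets; only its
values on subsets of X are relevant (it is a vector indexed by the subsets of X).\<close>

definition polymatroid :: "'e set \<Rightarrow> ('e set \<Rightarrow> real) \<Rightarrow> bool" where
  "polymatroid X h \<longleftrightarrow> finite X \<and> h {} = 0 \<and>
     (\<forall>A. A \<subseteq> X \<longrightarrow> h A \<ge> 0) \<and>
     (\<forall>A B. A \<subseteq> B \<and> B \<subseteq> X \<longrightarrow> h A \<le> h B) \<and>
     (\<forall>A B. A \<subseteq> X \<and> B \<subseteq> X \<longrightarrow> h (A \<union> B) + h (A \<inter> B) \<le> h A + h B)"

definition matroid :: "'e set \<Rightarrow> ('e set \<Rightarrow> real) \<Rightarrow> bool" where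
  "matroid X h \<longleftrightarrow> polymatroid X h \<and>
     (\<forall>A. A \<subseteq> X \<longrightarrow> h A \<in> \<int> \<and> h A \<le> real (card A))"

definition circuit :: "'e set \<Rightarrow> ('e set \<Rightarrow> real) \<Rightarrow> 'e set \<Rightarrow> bool" where
  "circuit X h C \<longleftrightarrow> C \<subseteq> X \<and> h C < real (card C) \<and>
     (\<forall>D. D \<subset> C \<longrightarrow> h D = real (card D))"

definition connected_matroid :: "'e set \<Rightarrow> ('e set \<Rightarrow> real) \<Rightarrow> bool" where
  "connected_matroid X h \<longleftrightarrow> matroid X h \<and>
     (\<forall>x\<in>X. \<forall>y\<in>X. x \<noteq> y \<longrightarrow> (\<exists>C. circuit X h C \<and> x \<in> C \<and> y \<in> C))"

definition fvecs :: "'a ring \<Rightarrow> nat \<Rightarrow> (nat \<Rightarrow> 'a) set" where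
  "fvecs R d = {v. (\<forall>i<d. v i \<in> carrier R) \<and> (\<forall>i. d \<le> i \<longrightarrow> v i = \<zero>\<^bsub>R\<^esub>)}"

definition lin_span :: "'a ring \<Rightarrow> nat \<Rightarrow> (nat \<Rightarrow> 'a) set \<Rightarrow> (nat \<Rightarrow> 'a) set" where
  "lin_span R d S = {v. \<exists>(n::nat) (vs :: nat \<Rightarrow> nat \<Rightarrow> 'a) (c :: nat \<Rightarrow> 'a).
      (\<forall>j<n. vs j \<in> S \<and> c j \<in> carrier R) \<and>
      v = (\<lambda>i. if i < d then finsum R (\<lambda>j. c j \<otimes>\<^bsub>R\<^esub> vs j i) {..<n} else \<zero>\<^bsub>R\<^esub>)}"

definition subspace :: "'a ring \<Rightarrow> nat \<Rightarrow> (nat \<Rightarrow> 'a) set \<Rightarrow> bool" where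
  "subspace R d W \<longleftrightarrow> W \<subseteq> fvecs R d \<and> lin_span R d W = W"

definition fdim :: "'a ring \<Rightarrow> nat \<Rightarrow> (nat \<Rightarrow> 'a) set \<Rightarrow> nat" where
  "fdim R d W = (LEAST n. \<exists>vs :: nat \<Rightarrow> nat \<Rightarrow> 'a.
      (\<forall>j<n. vs j \<in> W) \<and> lin_span R d (vs ` {..<n}) = W)"

text \<open>Every finite field is
isomorphic to one with carrier in nat, and the sum of the subspaces is finite dimensional,
so coordinate spaces F^d suffice.\<close>
definition q_representable :: "nat \<Rightarrow> 'e set \<Rightarrow> ('e set \<Rightarrow> real) \<Rightarrow> bool" where
  "q_representable q X h \<longleftrightarrow> polymatroid X h \<and>
     (\<exists>(R :: nat ring) (d::nat) (V :: 'e \<Rightarrow> (nat \<Rightarrow> nat) set).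
        field R \<and> finite (carrier R) \<and> card (carrier R) = q \<and>
        (\<forall>x\<in>X. subspace R d (V x)) \<and>
        (\<forall>A. A \<subseteq> X \<longrightarrow> h A = real (fdim R d (lin_span R d (\<Union>x\<in>A. V x)))))"

definition representable :: "'e set \<Rightarrow> ('e set \<Rightarrow> real) \<Rightarrow> bool" where
  "representable X h \<longleftrightarrow> (\<exists>q. q_representable q X h)"

definition even_representable :: "'e set \<Rightarrow> ('e set \<Rightarrow> real) \<Rightarrow> bool" where
  "even_representable X h \<longleftrightarrow> (\<exists>m::nat. m > 0 \<and> q_representable (2 ^ m) X h)"

definition odd_representable :: "'e set \<Rightarrow> ('e set \<Rightarrow> real) \<Rightarrow> bool" where
  "odd_representable X h \<longleftrightarrow>
     (\<exists>(p::nat) (m::nat). prime p \<and> odd p \<and> m > 0 \<and> q_representable (p ^ m) X h)"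

text \<open>Limits in R^(2^|X|): coordinatewise convergence on all subsets of X.\<close>
definition almost_even_representable :: "'e set \<Rightarrow> ('e set \<Rightarrow> real) \<Rightarrow> bool" where
  "almost_even_representable X h \<longleftrightarrow>
     (\<exists>(g :: nat \<Rightarrow> 'e set \<Rightarrow> real) (c :: nat \<Rightarrow> real).
        (\<forall>i. even_representable X (g i) \<and> c i > 0) \<and>
        (\<forall>A. A \<subseteq> X \<longrightarrow> (\<lambda>i. c i * g i A) \<longlonglongrightarrow> h A))"

definition almost_odd_representable :: "'e set \<Rightarrow> ('e set \<Rightarrow> real) \<Rightarrow> bool" where
  "almost_odd_representable X h \<longleftrightarrow>
     (\<exists>(g :: nat \<Rightarrow> 'e set \<Rightarrow> real) (c :: nat \<Rightarrow> real).
        (\<forall>i. odd_representable X (g i) \<and> c i > 0) \<and>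
        (\<forall>A. A \<subseteq> X \<longrightarrow> (\<lambda>i. c i * g i A) \<longlonglongrightarrow> h A))"

text \<open>The minimal convex cone containing all representable rank functions on X:
all nonnegative finite combinations (as vectors indexed by the subsets of X).\<close>
definition rep_cone :: "'e set \<Rightarrow> ('e set \<Rightarrow> real) set" where
  "rep_cone X = {f. \<exists>(n::nat) (c :: nat \<Rightarrow> real) (g :: nat \<Rightarrow> 'e set \<Rightarrow> real).
       (\<forall>j<n. c j \<ge> 0 \<and> representable X (g j)) \<and>
       (\<forall>A. A \<subseteq> X \<longrightarrow> f A = (\<Sum>j<n. c j * g j A))}"

text \<open>Closure in the finite-dimensional space R^(2^|X|) = sequential closure.\<close>
definition cc_representable :: "'e set \<Rightarrow> ('e set \<Rightarrow> real) \<Rightarrow> bool" where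
  "cc_representable X h \<longleftrightarrow>
     (\<exists>f :: nat \<Rightarrow> 'e set \<Rightarrow> real. (\<forall>i. f i \<in> rep_cone X) \<and>
        (\<forall>A. A \<subseteq> X \<longrightarrow> (\<lambda>i. f i A) \<longlonglongrightarrow> h A))"

end

theory Submission
  imports Defs "HOL-Algebra.Multiplicative_Group" "HOL-Algebra.Sylow"
begin

text \<open>A connected matroid rank function r spans an extreme ray of the cone of polymatroids, in a
  quantitative form: there is a linear functional, vanishing at r and nonnegative on polymatroids,
  that bounds how far each member of a family of polymatroids summing approximately to r lies from
  the ray through r.

  Suppose the truncation \<Phi>\<epsilon> were a limit of nonnegative combinations of representable rank
  functions. Every representable function is even or odd representable, since finite fields have
  prime power order. On X1 the combinations converge to \<Phi>1; if the odd summands kept a mass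
  bounded away from zero, suitably normalized odd summands would converge to \<Phi>1, so \<Phi>1 would
  be almost odd representable. Hence on X1 only the even summands survive, and on X2 only the odd ones. By
  monotonicity the combination then has rank at least \<Phi>1(X1) + \<Phi>2(X2) on the whole ground set,
  while the truncation has rank \<Phi>1(X1) + \<Phi>2(X2) - \<epsilon> there.\<close>

section \<open>Finite fields have prime power order\<close>

lemma prime_power_if_unique_prime_divisor:
  fixes n p :: nat
  assumes "prime p" "n > 0" "\<And>q. prime q \<Longrightarrow> q dvd n \<Longrightarrow> q = p"
  shows "n = p ^ multiplicity p n"
proof -
  obtain m where dec: "n = p ^ multiplicity p n * m" and "\<not> p dvd m"
    using multiplicity_decompose'[of n p] assms(1,2) prime_gt_1_nat[of p] by auto
  have "m = 1"
  proof (rule ccontr)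
    assume "m \<noteq> 1"
    then obtain q where "prime q" "q dvd m" using prime_factor_nat by blast
    then show False
      using assms(3)[of q] \<open>\<not> p dvd m\<close> dec by (metis dvd_mult)
  qed
  then show ?thesis using dec by simp
qed

lemma (in group) exists_element_of_prime_order:
  assumes "finite (carrier G)" "prime q" "q dvd order G"
  shows "\<exists>x\<in>carrier G. ord x = q"
proof -
  obtain m where "order G = q ^ 1 * m" using assms(3) by auto
  then obtain H where H: "subgroup H G" "card H = q"
    using sylow_thm[OF assms(2) is_group, of 1 m] assms(1) by auto
  have "\<not> H \<subseteq> {\<one>}"
    using card_mono[of "{\<one>}" H] H(2) prime_ge_2_nat[OF assms(2)] by auto
  then obtain x where x: "x \<in> H" "x \<noteq> \<one>" by blast
  have xG: "x \<in> carrier G" using x(1) H(1) subgroup.subset by blast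
  have "x [^]\<^bsub>G\<lparr>carrier := H\<rparr>\<^esub> order (G\<lparr>carrier := H\<rparr>) = \<one>"
    using group.pow_order_eq_1[OF subgroup.subgroup_is_group[OF H(1) is_group], of x] x(1) by simp
  then have "x [^] q = \<one>"
    using nat_pow_consistent[of x q H] H by (simp add: order_def)
  then have "ord x dvd q" using pow_eq_id[OF xG] by simp
  moreover have "ord x \<noteq> 1" using ord_eq_1[OF xG] x(2) by simp
  ultimately show ?thesis using xG assms(2) prime_nat_iff by blast
qed

lemma (in ring) add_pow_add_ord_one:
  assumes "x \<in> carrier R"
  shows "[add.ord \<one>] \<cdot> x = \<zero>"
proof -
  have "[add.ord \<one>] \<cdot> x = ([add.ord \<one>] \<cdot> \<one>) \<otimes> x"
    using add_pow_ldistr[of \<one> x "add.ord \<one>"] assms by simp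
  also have "[add.ord \<one>] \<cdot> \<one> = \<zero>"
    using add.pow_eq_id[of \<one> "add.ord \<one>"] by simp
  finally show ?thesis using assms by simp
qed

lemma (in domain) prime_add_ord_one:
  assumes "finite (carrier R)"
  shows "prime (add.ord \<one>)"
proof -
  let ?p = "add.ord \<one>"
  have mult: "([a] \<cdot> \<one>) \<otimes> ([b] \<cdot> \<one>) = [(a * b)] \<cdot> \<one>" for a b :: nat
    by (simp add: add_pow_ldistr add.nat_pow_pow mult.commute)
  have "?p dvd card (carrier R)"
    using add.ord_dvd_group_order[of \<one>] by (simp add: order_def)
  moreover have "card (carrier R) > 0" using assms by (auto simp: card_gt_0_iff)
  ultimately have "?p \<noteq> 0" by auto
  moreover have "?p \<noteq> 1" using add.ord_eq_1[of \<one>] by simp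
  moreover have "a = 1 \<or> a = ?p" if a: "a dvd ?p" for a
  proof -
    obtain b where b: "?p = a * b" using a by (auto elim: dvdE)
    then have "([a] \<cdot> \<one>) \<otimes> ([b] \<cdot> \<one>) = \<zero>" using mult add.pow_eq_id[of \<one>] by simp
    then have "?p dvd a \<or> ?p dvd b" using integral add.pow_eq_id[of \<one>] by auto
    then show ?thesis
    proof
      assume "?p dvd a"
      then show ?thesis using a dvd_antisym by blast
    next
      assume "?p dvd b"
      then have "b = ?p" using b dvd_antisym by (metis dvd_triv_right)
      then show ?thesis using b \<open>?p \<noteq> 0\<close> by simp
    qed
  qed
  ultimately show ?thesis by (simp add: prime_nat_iff)
qed

text \<open>The characteristic p kills every element, so every prime divisor of the order of the
  additive group, being the order of some element (Cauchy), equals p.\<close>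
lemma (in field) card_prime_power:
  assumes "finite (carrier R)"
  shows "\<exists>p m. prime p \<and> m > 0 \<and> card (carrier R) = p ^ m"
proof -
  let ?p = "add.ord \<one>"
  have p: "prime ?p" using prime_add_ord_one[OF assms] .
  have "q = ?p" if q: "prime q" "q dvd card (carrier R)" for q
  proof -
    obtain x where x: "x \<in> carrier R" "add.ord x = q"
      using add.exists_element_of_prime_order[OF assms q(1)] q(2) by (auto simp: order_def)
    then have "q dvd ?p" using add.pow_eq_id[OF x(1)] add_pow_add_ord_one[OF x(1)] by simp
    then show ?thesis using q(1) p by (simp add: primes_dvd_imp_eq)
  qed
  moreover have pos: "card (carrier R) > 0" using assms by (auto simp: card_gt_0_iff)
  ultimately have "card (carrier R) = ?p ^ multiplicity ?p (card (carrier R))"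
    using prime_power_if_unique_prime_divisor[OF p] by blast
  moreover have "multiplicity ?p (card (carrier R)) > 0"
    using add.ord_dvd_group_order[of \<one>] p pos
    by (simp add: order_def prime_multiplicity_gt_zero_iff)
  ultimately show ?thesis using p by blast
qed

section \<open>Polymatroids and representability\<close>

lemma polymatroidD:
  assumes "polymatroid X h"
  shows "finite X" "h {} = 0" "\<And>A. A \<subseteq> X \<Longrightarrow> h A \<ge> 0"
    "\<And>A B. A \<subseteq> B \<Longrightarrow> B \<subseteq> X \<Longrightarrow> h A \<le> h B"
    "\<And>A B. A \<subseteq> X \<Longrightarrow> B \<subseteq> X \<Longrightarrow> h (A \<union> B) + h (A \<inter> B) \<le> h A + h B"
  using assms unfolding polymatroid_def by blast+

lemma polymatroid_subset:
  assumes "polymatroid X h" "Y \<subseteq> X"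
  shows "polymatroid Y h"
  using assms finite_subset unfolding polymatroid_def by (metis order_trans)

lemma polymatroid_scale:
  assumes "polymatroid X h" "c \<ge> 0"
  shows "polymatroid X (\<lambda>A. c * h A)"
  using assms unfolding polymatroid_def
  by (auto simp flip: distrib_left intro: mult_left_mono)

lemma polymatroid_subadditive:
  assumes "polymatroid X h" "I \<subseteq> X"
  shows "h I \<le> (\<Sum>e\<in>I. h {e})"
proof -
  have "finite I" using assms polymatroidD(1) finite_subset by blast
  then show ?thesis using assms(2)
  proof (induction I rule: finite_induct)
    case empty
    then show ?case using polymatroidD(2)[OF assms(1)] by simp
  next
    case (insert x I)
    have "h ({x} \<union> I) + h ({x} \<inter> I) \<le> h {x} + h I"
      using polymatroidD(5)[OF assms(1), of "{x}" I] insert.prems by simp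
    then show ?case using insert polymatroidD(2)[OF assms(1)] by simp
  qed
qed

lemma q_representable_subset:
  assumes "q_representable q X h" "Y \<subseteq> X"
  shows "q_representable q Y h"
proof -
  obtain R :: "nat ring" and d V where R: "field R" "finite (carrier R)" "card (carrier R) = q"
    and V: "\<forall>x\<in>X. subspace R d (V x)"
    and h: "\<forall>A. A \<subseteq> X \<longrightarrow> h A = real (fdim R d (lin_span R d (\<Union>x\<in>A. V x)))"
    using assms(1) unfolding q_representable_def by blast
  have "polymatroid Y h" using assms polymatroid_subset unfolding q_representable_def by blast
  then show ?thesis
    unfolding q_representable_def using R V h assms(2)
    by (intro conjI exI[of _ R] exI[of _ d] exI[of _ V]) auto
qed

lemma even_representable_subset:
  "even_representable X h \<Longrightarrow> Y \<subseteq> X \<Longrightarrow> even_representable Y h"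
  unfolding even_representable_def using q_representable_subset by blast

lemma odd_representable_subset:
  "odd_representable X h \<Longrightarrow> Y \<subseteq> X \<Longrightarrow> odd_representable Y h"
  unfolding odd_representable_def using q_representable_subset by blast

lemma representable_polymatroid: "representable X h \<Longrightarrow> polymatroid X h"
  unfolding representable_def q_representable_def by blast

lemma representable_even_or_odd:
  assumes "representable X h"
  shows "even_representable X h \<or> odd_representable X h"
proof -
  obtain q where q: "q_representable q X h" using assms unfolding representable_def by blast
  then obtain R :: "nat ring" where R: "field R" "finite (carrier R)" "card (carrier R) = q"
    unfolding q_representable_def by blast
  then obtain p m where p: "prime p" "m > 0" "q = p ^ m"
    using field.card_prime_power by metis
  show ?thesis
  proof (cases "p = 2")
    case True
    then show ?thesis using q p unfolding even_representable_def by blast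
  next
    case False
    then have "odd p" using p(1) prime_ge_2_nat[OF p(1)] prime_odd_nat by force
    then show ?thesis using q p unfolding odd_representable_def by blast
  qed
qed

section \<open>Matroids\<close>

lemma matroidD:
  assumes "matroid X r"
  shows "polymatroid X r" "\<And>A. A \<subseteq> X \<Longrightarrow> r A \<in> \<int>" "\<And>A. A \<subseteq> X \<Longrightarrow> r A \<le> real (card A)"
  using assms unfolding matroid_def by blast+

definition independent_sets :: "'e set \<Rightarrow> ('e set \<Rightarrow> real) \<Rightarrow> 'e set set" where
  "independent_sets X r = {I. I \<subseteq> X \<and> r I = real (card I)}"

lemma matroid_independent_subset:
  assumes M: "matroid X r" and I: "I \<in> independent_sets X r" and J: "J \<subseteq> I"
  shows "J \<in> independent_sets X r"
proof -
  note P = matroidD(1)[OF M]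
  have IX: "I \<subseteq> X" and rI: "r I = real (card I)" using I unfolding independent_sets_def by auto
  have fin: "finite I" using polymatroidD(1)[OF P] IX finite_subset by blast
  have "J \<union> (I - J) = I" "J \<inter> (I - J) = {}" using J by auto
  then have "r I + r {} \<le> r J + r (I - J)"
    using polymatroidD(5)[OF P, of J "I - J"] IX J by auto
  moreover have "r (I - J) \<le> real (card (I - J))" using matroidD(3)[OF M, of "I - J"] IX by blast
  moreover have "card I = card J + card (I - J)"
    using card_Diff_subset[of J I] card_mono[OF fin J] fin J finite_subset by fastforce
  ultimately have "r J \<ge> real (card J)" using rI polymatroidD(2)[OF P] by simp
  moreover have "r J \<le> real (card J)" using matroidD(3)[OF M, of J] IX J by blast
  ultimately show ?thesis using IX J unfolding independent_sets_def by auto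
qed

lemma matroid_insert_rank_cases:
  assumes M: "matroid X r" and A: "A \<subseteq> X" "x \<in> X" "x \<notin> A"
  shows "r (insert x A) = r A \<or> r (insert x A) = r A + 1"
proof -
  note P = matroidD(1)[OF M]
  have "r (A \<union> {x}) + r (A \<inter> {x}) \<le> r A + r {x}" using polymatroidD(5)[OF P, of A "{x}"] A by simp
  moreover have "r {x} \<le> 1" using matroidD(3)[OF M, of "{x}"] A by simp
  ultimately have "r (insert x A) \<le> r A + 1" using A polymatroidD(2)[OF P] by simp
  moreover have "r A \<le> r (insert x A)" using polymatroidD(4)[OF P, of A "insert x A"] A by auto
  moreover have "r (insert x A) - r A \<in> \<int>" using matroidD(2)[OF M] A by simp
  then obtain z where z: "r (insert x A) - r A = of_int z" by (elim Ints_cases)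
  ultimately have "0 \<le> z" "z \<le> 1" using z by linarith+
  then have "z = 0 \<or> z = 1" by linarith
  then show ?thesis using z by auto
qed

lemma matroid_basis_exists:
  assumes M: "matroid X r" and A: "A \<subseteq> X"
  obtains B where "B \<subseteq> A" "B \<in> independent_sets X r" "r B = r A"
proof -
  note P = matroidD(1)[OF M]
  have "finite A" using finite_subset[OF A polymatroidD(1)[OF P]] .
  then have "\<exists>B. B \<subseteq> A \<and> B \<in> independent_sets X r \<and> r B = r A" using A
  proof (induction A rule: finite_induct)
    case empty
    then show ?case using polymatroidD(2)[OF P] by (simp add: independent_sets_def)
  next
    case (insert x A)
    have AX: "A \<subseteq> X" and xX: "x \<in> X" using insert.prems by auto
    obtain B where B: "B \<subseteq> A" "B \<in> independent_sets X r" "r B = r A"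
      using insert.IH[OF AX] by blast
    consider "r (insert x A) = r A" | "r (insert x A) = r A + 1"
      using matroid_insert_rank_cases[OF M AX xX insert(2)] by blast
    then show ?case
    proof cases
      case 1
      then show ?thesis using B by (intro exI[of _ B]) auto
    next
      case 2
      \<comment> \<open>Submodularity on A and insert x B, which meet in B, forces x to raise the rank of B.\<close>
      have "A \<union> insert x B = insert x A" "A \<inter> insert x B = B" using B(1) insert(2) by auto
      then have "r (insert x A) + r B \<le> r A + r (insert x B)"
        using polymatroidD(5)[OF P, of A "insert x B"] insert.prems B(1) by auto
      moreover have "finite B" using B(1) insert(1) finite_subset by blast
      moreover have "x \<notin> B" using B(1) insert(2) by blast
      moreover have "r (insert x B) \<le> real (card (insert x B))"
        using matroidD(3)[OF M] insert.prems B(1) by auto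
      ultimately have "r (insert x B) = real (card (insert x B))" "r (insert x B) = r (insert x A)"
        using 2 B(2,3) by (auto simp: independent_sets_def)
      then show ?thesis
        using B(1) insert.prems unfolding independent_sets_def by (intro exI[of _ "insert x B"]) auto
    qed
  qed
  then show ?thesis using that by blast
qed

lemma circuit_delete:
  assumes M: "matroid X r" and C: "circuit X r C" and e: "e \<in> C"
  shows "C - {e} \<in> independent_sets X r" "r C = r (C - {e})"
proof -
  have CX: "C \<subseteq> X" and "r C < real (card C)"
    and indep: "\<And>D. D \<subset> C \<Longrightarrow> r D = real (card D)"
    using C unfolding circuit_def by auto
  moreover have "finite C" using finite_subset[OF CX polymatroidD(1)[OF matroidD(1)[OF M]]] .
  moreover have rCe: "r (C - {e}) = real (card (C - {e}))" using indep e by blast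
  ultimately show "C - {e} \<in> independent_sets X r" unfolding independent_sets_def by auto
  have "real (card (C - {e})) + 1 = real (card C)"
    using card_Suc_Diff1[OF \<open>finite C\<close> e] by simp
  moreover have "insert e (C - {e}) = C" using e by blast
  ultimately show "r C = r (C - {e})"
    using matroid_insert_rank_cases[OF M, of "C - {e}" e] CX e rCe \<open>r C < real (card C)\<close>
    by auto
qed

section \<open>Connected matroid rank functions are extremal\<close>

definition rank_preserving_pairs :: "'e set \<Rightarrow> ('e set \<Rightarrow> real) \<Rightarrow> ('e set \<times> 'e set) set" where
  "rank_preserving_pairs X r = {(A, B). A \<subseteq> X \<and> B \<subseteq> A \<and> r B = r A}"

text \<open>The linear functional behind the extremality of r: it vanishes at r and is nonnegative on
  polymatroids.\<close>
definition matroid_defect :: "'e set \<Rightarrow> ('e set \<Rightarrow> real) \<Rightarrow> ('e set \<Rightarrow> real) \<Rightarrow> real" where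
  "matroid_defect X r h =
     (\<Sum>(A, B)\<in>rank_preserving_pairs X r. h A - h B) +
     (\<Sum>I\<in>independent_sets X r. (\<Sum>e\<in>I. h {e}) - h I)"

lemma finite_rank_preserving_pairs: "finite X \<Longrightarrow> finite (rank_preserving_pairs X r)"
  by (rule finite_subset[of _ "Pow X \<times> Pow X"]) (auto simp: rank_preserving_pairs_def)

lemma finite_independent_sets: "finite X \<Longrightarrow> finite (independent_sets X r)"
  by (rule finite_subset[of _ "Pow X"]) (auto simp: independent_sets_def)

lemma
  assumes "polymatroid X h"
  shows rank_preserving_pair_defect_nonneg: "(A, B) \<in> rank_preserving_pairs X r \<Longrightarrow> 0 \<le> h A - h B"
    and independent_set_defect_nonneg: "I \<in> independent_sets X r \<Longrightarrow> 0 \<le> (\<Sum>e\<in>I. h {e}) - h I"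
  using assms polymatroidD(4) polymatroid_subadditive
  by (auto simp: rank_preserving_pairs_def independent_sets_def)

lemma
  assumes "polymatroid X h"
  shows rank_preserving_pair_le_matroid_defect:
      "(A, B) \<in> rank_preserving_pairs X r \<Longrightarrow> h A - h B \<le> matroid_defect X r h"
    and independent_set_le_matroid_defect:
      "I \<in> independent_sets X r \<Longrightarrow> (\<Sum>e\<in>I. h {e}) - h I \<le> matroid_defect X r h"
    and matroid_defect_nonneg: "0 \<le> matroid_defect X r h"
proof -
  have fin: "finite X" using polymatroidD(1)[OF assms] .
  have P: "0 \<le> (\<Sum>(A, B)\<in>rank_preserving_pairs X r. h A - h B)"
    using rank_preserving_pair_defect_nonneg[OF assms] by (intro sum_nonneg) auto
  have I: "0 \<le> (\<Sum>I\<in>independent_sets X r. (\<Sum>e\<in>I. h {e}) - h I)"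
    using independent_set_defect_nonneg[OF assms] by (intro sum_nonneg) auto
  show "(A, B) \<in> rank_preserving_pairs X r \<Longrightarrow> h A - h B \<le> matroid_defect X r h"
    using member_le_sum[of "(A, B)" "rank_preserving_pairs X r" "\<lambda>(A, B). h A - h B"]
      rank_preserving_pair_defect_nonneg[OF assms] finite_rank_preserving_pairs[OF fin] I
    unfolding matroid_defect_def by fastforce
  show "I \<in> independent_sets X r \<Longrightarrow> (\<Sum>e\<in>I. h {e}) - h I \<le> matroid_defect X r h"
    using member_le_sum[of I "independent_sets X r" "\<lambda>I. (\<Sum>e\<in>I. h {e}) - h I"]
      independent_set_defect_nonneg[OF assms] finite_independent_sets[OF fin] P
    unfolding matroid_defect_def by fastforce
  show "0 \<le> matroid_defect X r h" using P I unfolding matroid_defect_def by simp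
qed

lemma matroid_defect_sum:
  fixes X :: "'e set" and u :: "'j \<Rightarrow> 'e set \<Rightarrow> real"
  shows "matroid_defect X r (\<lambda>A. \<Sum>j\<in>J. u j A) = (\<Sum>j\<in>J. matroid_defect X r (u j))"
proof -
  have "(\<Sum>(A, B)\<in>P. (\<Sum>j\<in>J. u j A) - (\<Sum>j\<in>J. u j B)) = (\<Sum>j\<in>J. \<Sum>(A, B)\<in>P. u j A - u j B)"
    for P :: "('e set \<times> 'e set) set"
    by (subst sum.swap) (simp add: case_prod_beta sum_subtractf)
  moreover have "(\<Sum>I\<in>S. (\<Sum>e\<in>I. \<Sum>j\<in>J. u j {e}) - (\<Sum>j\<in>J. u j I)) =
      (\<Sum>j\<in>J. \<Sum>I\<in>S. (\<Sum>e\<in>I. u j {e}) - u j I)" for S :: "'e set set"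
    by (simp add: sum_subtractf sum.swap[where B = J])
  ultimately show ?thesis unfolding matroid_defect_def by (simp add: sum.distrib)
qed

lemma matroid_defect_diff:
  fixes u v :: "'e set \<Rightarrow> real"
  shows "matroid_defect X r (\<lambda>A. u A - v A) = matroid_defect X r u - matroid_defect X r v"
  unfolding matroid_defect_def by (simp add: case_prod_beta sum_subtractf)

lemma matroid_defect_rank:
  assumes "matroid X r"
  shows "matroid_defect X r r = 0"
proof -
  have "r {e} = 1" if "I \<in> independent_sets X r" "e \<in> I" for I e
    using matroid_independent_subset[OF assms that(1), of "{e}"] that(2)
    by (simp add: independent_sets_def)
  then show ?thesis
    unfolding matroid_defect_def by (auto simp: rank_preserving_pairs_def independent_sets_def
        intro!: sum.neutral)
qed

lemma matroid_defect_le: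
  fixes u :: "'e set \<Rightarrow> real"
  assumes "finite X"
  shows "matroid_defect X r u \<le>
    (2 * card (rank_preserving_pairs X r) + card (independent_sets X r) * (card X + 1)) *
    (\<Sum>A\<in>Pow X. \<bar>u A\<bar>)"
proof -
  define N where "N = (\<Sum>A\<in>Pow X. \<bar>u A\<bar>)"
  have bound: "\<bar>u A\<bar> \<le> N" if "A \<subseteq> X" for A
    using member_le_sum[of A "Pow X" "\<lambda>A. \<bar>u A\<bar>"] assms that unfolding N_def by simp
  have "u A - u B \<le> 2 * N" if "(A, B) \<in> rank_preserving_pairs X r" for A B
  proof -
    have "A \<subseteq> X" "B \<subseteq> X" using that by (auto simp: rank_preserving_pairs_def)
    then show ?thesis using bound[of A] bound[of B] by linarith
  qed
  then have "(\<Sum>(A, B)\<in>rank_preserving_pairs X r. u A - u B) \<le>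
      (\<Sum>p\<in>rank_preserving_pairs X r. 2 * N)"
    by (intro sum_mono) auto
  moreover have "(\<Sum>e\<in>I. u {e}) - u I \<le> (card X + 1) * N" if "I \<in> independent_sets X r" for I
  proof -
    have IX: "I \<subseteq> X" using that by (simp add: independent_sets_def)
    have "(\<Sum>e\<in>I. u {e}) \<le> (\<Sum>e\<in>I. N)"
    proof (rule sum_mono)
      show "u {e} \<le> N" if "e \<in> I" for e using bound[of "{e}"] IX that by auto
    qed
    also have "\<dots> \<le> card X * N"
      using card_mono[OF assms IX] bound[of "{}"] by (simp add: mult_right_mono)
    finally have "(\<Sum>e\<in>I. u {e}) \<le> card X * N" .
    moreover have "- u I \<le> N" using bound[OF IX] by linarith
    ultimately show ?thesis by (simp add: distrib_right)
  qed
  then have "(\<Sum>I\<in>independent_sets X r. (\<Sum>e\<in>I. u {e}) - u I) \<le>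
      (\<Sum>I\<in>independent_sets X r. (card X + 1) * N)"
    by (intro sum_mono) auto
  ultimately show ?thesis unfolding matroid_defect_def N_def[symmetric] by (simp add: algebra_simps)
qed

lemma circuit_element_defect:
  assumes M: "matroid X r" and C: "circuit X r C" and x: "x \<in> C" and h: "polymatroid X h"
  shows "\<bar>h {x} - ((\<Sum>e\<in>C. h {e}) - h C)\<bar> \<le> matroid_defect X r h"
proof -
  have CX: "C \<subseteq> X" using C by (simp add: circuit_def)
  have "finite C" using finite_subset[OF CX polymatroidD(1)[OF h]] .
  have split: "(\<Sum>e\<in>C. h {e}) = h {x} + (\<Sum>e\<in>C - {x}. h {e})"
    using sum.remove[OF \<open>finite C\<close> x] .
  have I: "C - {x} \<in> independent_sets X r" and "r C = r (C - {x})"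
    using circuit_delete[OF M C x] by auto
  then have P: "(C, C - {x}) \<in> rank_preserving_pairs X r"
    using CX by (auto simp: rank_preserving_pairs_def)
  show ?thesis
    using split independent_set_defect_nonneg[OF h I] independent_set_le_matroid_defect[OF h I]
        rank_preserving_pair_defect_nonneg[OF h P] rank_preserving_pair_le_matroid_defect[OF h P]
    by (simp only: abs_le_iff) linarith
qed

lemma connected_matroid_singleton_defect:
  assumes CM: "connected_matroid X r" and h: "polymatroid X h" and e: "e \<in> X" "e' \<in> X"
  shows "\<bar>h {e} - h {e'}\<bar> \<le> 2 * matroid_defect X r h"
proof (cases "e = e'")
  case True
  then show ?thesis using matroid_defect_nonneg[OF h] by simp
next
  case False
  then obtain C where C: "circuit X r C" "e \<in> C" "e' \<in> C"
    using CM e unfolding connected_matroid_def by blast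
  have M: "matroid X r" using CM by (simp add: connected_matroid_def)
  show ?thesis
    using circuit_element_defect[OF M C(1) C(2) h] circuit_element_defect[OF M C(1) C(3) h]
    by (simp only: abs_le_iff) linarith
qed

text \<open>Values on singletons are nearly constant along circuits, and a basis B of A has
  h A close to the sum of h over B, so h is close to the multiple h{e} of r.\<close>
lemma connected_matroid_rank_defect:
  assumes CM: "connected_matroid X r" and h: "polymatroid X h" and e: "e \<in> X" and A: "A \<subseteq> X"
  shows "\<bar>h A - h {e} * r A\<bar> \<le> (2 + 2 * card X) * matroid_defect X r h"
proof -
  have M: "matroid X r" using CM by (simp add: connected_matroid_def)
  define D where "D = matroid_defect X r h"
  obtain B where B: "B \<subseteq> A" "B \<in> independent_sets X r" "r B = r A"
    using matroid_basis_exists[OF M A] .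
  have BX: "B \<subseteq> X" using B(1) A by blast
  have finX: "finite X" using polymatroidD(1)[OF h] .
  have P: "(A, B) \<in> rank_preserving_pairs X r" using A B by (auto simp: rank_preserving_pairs_def)
  have rA: "r A = card B" using B by (simp add: independent_sets_def)
  have "\<bar>(\<Sum>f\<in>B. h {f}) - card B * h {e}\<bar> = \<bar>\<Sum>f\<in>B. h {f} - h {e}\<bar>"
    by (simp add: sum_subtractf)
  also have "\<dots> \<le> (\<Sum>f\<in>B. \<bar>h {f} - h {e}\<bar>)" by (rule sum_abs)
  also have "\<dots> \<le> (\<Sum>f\<in>B. 2 * D)"
    using connected_matroid_singleton_defect[OF CM h _ e] BX unfolding D_def
    by (intro sum_mono) blast
  also have "\<dots> \<le> card X * (2 * D)"
    using card_mono[OF finX BX] matroid_defect_nonneg[OF h] unfolding D_def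
    by (simp add: mult_right_mono)
  finally have "\<bar>(\<Sum>f\<in>B. h {f}) - card B * h {e}\<bar> \<le> card X * (2 * D)" .
  moreover have "h A - h {e} * r A =
      (h A - h B) - ((\<Sum>f\<in>B. h {f}) - h B) + ((\<Sum>f\<in>B. h {f}) - card B * h {e})"
    using rA by simp
  ultimately have "\<bar>h A - h {e} * r A\<bar> \<le> D + D + card X * (2 * D)"
    using independent_set_defect_nonneg[OF h B(2)] independent_set_le_matroid_defect[OF h B(2)]
      rank_preserving_pair_defect_nonneg[OF h P] rank_preserving_pair_le_matroid_defect[OF h P]
    unfolding D_def by (simp only: abs_le_iff) linarith
  then show ?thesis unfolding D_def by (simp add: algebra_simps)
qed

definition ray_deviation :: "'e set \<Rightarrow> ('e set \<Rightarrow> real) \<Rightarrow> 'e \<Rightarrow> ('e set \<Rightarrow> real) \<Rightarrow> real" where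
  "ray_deviation X r e h = (\<Sum>A\<in>Pow X. \<bar>h A - h {e} * r A\<bar>)"

text \<open>By linearity, and since the defect vanishes at r, the defects of the members add up to
  the defect of the error (\<Sum>j. h j) - r.\<close>
lemma connected_matroid_ray_deviation_bound:
  assumes CM: "connected_matroid X r" and e: "e \<in> X"
  obtains K where "K \<ge> 0"
    "\<And>(J :: 'j set) h. (\<And>j. j \<in> J \<Longrightarrow> polymatroid X (h j)) \<Longrightarrow>
       (\<Sum>j\<in>J. ray_deviation X r e (h j)) \<le> K * (\<Sum>A\<in>Pow X. \<bar>(\<Sum>j\<in>J. h j A) - r A\<bar>)"
proof
  have M: "matroid X r" using CM by (simp add: connected_matroid_def)
  have finX: "finite X" using polymatroidD(1)[OF matroidD(1)[OF M]] .
  define k where "k = card (Pow X) * (2 + 2 * real (card X))"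
  define C :: real where
    "C = 2 * card (rank_preserving_pairs X r) + card (independent_sets X r) * (card X + 1)"
  show "k * C \<ge> 0" unfolding k_def C_def by simp
  fix J :: "'j set" and h
  assume h: "\<And>j. j \<in> J \<Longrightarrow> polymatroid X (h j)"
  define s where "s = (\<lambda>A. \<Sum>j\<in>J. h j A)"
  have "(\<Sum>j\<in>J. ray_deviation X r e (h j)) \<le> (\<Sum>j\<in>J. k * matroid_defect X r (h j))"
  proof (rule sum_mono)
    fix j assume "j \<in> J"
    then have "ray_deviation X r e (h j) \<le> (\<Sum>A\<in>Pow X. (2 + 2 * card X) * matroid_defect X r (h j))"
      unfolding ray_deviation_def using connected_matroid_rank_defect[OF CM h e]
      by (intro sum_mono) simp
    then show "ray_deviation X r e (h j) \<le> k * matroid_defect X r (h j)"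
      unfolding k_def by simp
  qed
  also have "\<dots> = k * matroid_defect X r (\<lambda>A. s A - r A)"
    unfolding s_def matroid_defect_diff matroid_defect_rank[OF M] matroid_defect_sum
    by (simp add: sum_distrib_left)
  also have "\<dots> \<le> k * (C * (\<Sum>A\<in>Pow X. \<bar>s A - r A\<bar>))"
  proof (rule mult_left_mono)
    show "matroid_defect X r (\<lambda>A. s A - r A) \<le> C * (\<Sum>A\<in>Pow X. \<bar>s A - r A\<bar>)"
      unfolding C_def by (rule matroid_defect_le[OF finX])
  qed (simp add: k_def)
  finally show "(\<Sum>j\<in>J. ray_deviation X r e (h j)) \<le> k * C * (\<Sum>A\<in>Pow X. \<bar>(\<Sum>j\<in>J. h j A) - r A\<bar>)"
    unfolding s_def by (simp add: mult.assoc)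
qed

section \<open>Approximation by rays\<close>

definition ray_limit :: "('e set \<Rightarrow> ('e set \<Rightarrow> real) \<Rightarrow> bool) \<Rightarrow> 'e set \<Rightarrow> ('e set \<Rightarrow> real) \<Rightarrow> bool" where
  "ray_limit Q X h \<longleftrightarrow> (\<exists>(g :: nat \<Rightarrow> 'e set \<Rightarrow> real) (c :: nat \<Rightarrow> real).
     (\<forall>i. Q X (g i) \<and> c i > 0) \<and> (\<forall>A. A \<subseteq> X \<longrightarrow> (\<lambda>i. c i * g i A) \<longlonglongrightarrow> h A))"

lemma almost_even_representable_iff_ray_limit:
  "almost_even_representable X h \<longleftrightarrow> ray_limit even_representable X h"
  unfolding almost_even_representable_def ray_limit_def ..

lemma almost_odd_representable_iff_ray_limit:
  "almost_odd_representable X h \<longleftrightarrow> ray_limit odd_representable X h"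
  unfolding almost_odd_representable_def ray_limit_def ..

lemma exists_le_mult_if_sum_le_mult_sum:
  fixes d t :: "'j \<Rightarrow> real"
  assumes "finite J" "\<And>j. j \<in> J \<Longrightarrow> 0 \<le> d j" "\<And>j. j \<in> J \<Longrightarrow> 0 \<le> t j"
    and "(\<Sum>j\<in>J. d j) \<le> M * (\<Sum>j\<in>J. t j)" "(\<Sum>j\<in>J. t j) > 0"
  shows "\<exists>j\<in>J. t j > 0 \<and> d j \<le> M * t j"
proof (rule ccontr)
  assume contra: "\<not> ?thesis"
  have le: "M * t j \<le> d j" if j: "j \<in> J" for j
  proof (cases "t j > 0")
    case True
    then show ?thesis using contra j by auto
  next
    case False
    then show ?thesis using assms(2,3)[OF j] by simp
  qed
  have "\<exists>j\<in>J. t j \<noteq> 0"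
  proof (rule ccontr)
    assume "\<not> (\<exists>j\<in>J. t j \<noteq> 0)"
    then have "(\<Sum>j\<in>J. t j) = 0" by simp
    then show False using assms(5) by simp
  qed
  then obtain j0 where j0: "j0 \<in> J" "t j0 > 0" using assms(3) by (auto simp: less_le)
  then have "M * t j0 < d j0" using contra by auto
  then have "(\<Sum>j\<in>J. M * t j) < (\<Sum>j\<in>J. d j)"
    using le j0(1) by (intro sum_strict_mono_ex1[OF assms(1)]) auto
  then show False using assms(4) by (simp add: sum_distrib_left)
qed

lemma abs_le_ray_deviation:
  assumes "finite X" "A \<subseteq> X"
  shows "\<bar>h A - h {e} * r A\<bar> \<le> ray_deviation X r e h"
  unfolding ray_deviation_def using assms
  by (intro member_le_sum[of A "Pow X" "\<lambda>A. \<bar>h A - h {e} * r A\<bar>"]) auto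

lemma ray_deviation_nonneg: "0 \<le> ray_deviation X r e h"
  unfolding ray_deviation_def by (simp add: sum_nonneg)

lemma normalized_tendsto_if_ray_deviation_vanishes:
  assumes X: "finite X" and A: "A \<subseteq> X" and pos: "\<And>k. 0 < u k {e}"
    and dev: "\<And>k. ray_deviation X r e (u k) \<le> \<rho> k * u k {e}" and \<rho>: "\<rho> \<longlonglongrightarrow> 0"
  shows "(\<lambda>k. u k A / u k {e}) \<longlonglongrightarrow> r A"
proof (rule tendsto_sandwich)
  have bound: "\<bar>u k A / u k {e} - r A\<bar> \<le> \<rho> k" for k
  proof -
    have "\<bar>u k A / u k {e} - r A\<bar> = \<bar>u k A - u k {e} * r A\<bar> / u k {e}"
      using pos[of k] by (simp add: field_simps)
    also have "\<dots> \<le> ray_deviation X r e (u k) / u k {e}"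
      using abs_le_ray_deviation[OF X A] pos[of k] by (simp add: divide_right_mono)
    also have "\<dots> \<le> \<rho> k" using dev[of k] pos[of k] by (simp add: divide_le_eq)
    finally show ?thesis .
  qed
  show "eventually (\<lambda>k. r A - \<rho> k \<le> u k A / u k {e}) sequentially"
    and "eventually (\<lambda>k. u k A / u k {e} \<le> r A + \<rho> k) sequentially"
    using abs_le_D1[OF bound] abs_le_D2[OF bound] by (auto intro!: always_eventually simp: algebra_simps)
  show "(\<lambda>k. r A - \<rho> k) \<longlonglongrightarrow> r A" "(\<lambda>k. r A + \<rho> k) \<longlonglongrightarrow> r A"
    using tendsto_add[OF tendsto_const \<rho>, of "r A"] tendsto_diff[OF tendsto_const \<rho>, of "r A"] by auto
qed

text \<open>If the selected members of the families keep a mass bounded below at e, then infinitely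
  often one of them lies close to the ray through r; normalizing it at e gives
  approximations of r by positive multiples of members of Q.\<close>
lemma ray_limit_if_selected_mass_persists:
  fixes h :: "nat \<Rightarrow> 'j \<Rightarrow> 'e set \<Rightarrow> real" and S :: "nat \<Rightarrow> 'j set"
  assumes X: "finite X" and e: "e \<in> X"
    and dev: "\<And>i. (\<Sum>j\<in>S i. ray_deviation X r e (h i j)) \<le> \<delta> i"
    and \<delta>: "\<delta> \<longlonglongrightarrow> 0" and fin: "\<And>i. finite (S i)"
    and nonneg: "\<And>i j. j \<in> S i \<Longrightarrow> 0 \<le> h i j {e}"
    and Q: "\<And>i j. j \<in> S i \<Longrightarrow> \<exists>c g. 0 \<le> c \<and> Q X g \<and> (\<forall>A\<subseteq>X. h i j A = c * g A)"
    and persists: "\<not> (\<lambda>i. \<Sum>j\<in>S i. h i j {e}) \<longlonglongrightarrow> 0"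
  shows "ray_limit Q X r"
proof -
  define T where "T i = (\<Sum>j\<in>S i. h i j {e})" for i
  have "T i \<ge> 0" for i unfolding T_def using nonneg by (simp add: sum_nonneg)
  then obtain \<eta> where \<eta>: "\<eta> > 0" and often: "\<And>k. \<exists>i\<ge>k. \<eta> \<le> T i"
    using persists unfolding T_def[symmetric] LIMSEQ_iff by (auto simp: not_less)
  then obtain idx where idx: "\<And>k. k \<le> idx k" "\<And>k. \<eta> \<le> T (idx k)" by metis
  define \<rho> where "\<rho> k = \<delta> (idx k) / \<eta>" for k
  have "(\<lambda>k. \<delta> (idx k)) \<longlonglongrightarrow> 0"
    using filterlim_compose[OF \<delta> filterlim_at_top_mono[OF filterlim_ident, of idx]] idx(1) by simp
  then have \<rho>: "\<rho> \<longlonglongrightarrow> 0" unfolding \<rho>_def using tendsto_divide_zero by blast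
  have "\<exists>j\<in>S (idx k). 0 < h (idx k) j {e} \<and> ray_deviation X r e (h (idx k) j) \<le> \<rho> k * h (idx k) j {e}"
    for k
  proof (rule exists_le_mult_if_sum_le_mult_sum[OF fin ray_deviation_nonneg nonneg])
    have "0 \<le> \<delta> (idx k)" using dev[of "idx k"] ray_deviation_nonneg sum_nonneg order_trans by metis
    then have "\<delta> (idx k) \<le> \<rho> k * T (idx k)"
      using idx(2)[of k] \<eta> by (simp add: \<rho>_def field_simps mult_right_mono)
    then show "(\<Sum>j\<in>S (idx k). ray_deviation X r e (h (idx k) j)) \<le> \<rho> k * (\<Sum>j\<in>S (idx k). h (idx k) j {e})"
      using dev[of "idx k"] unfolding T_def by linarith
    show "(\<Sum>j\<in>S (idx k). h (idx k) j {e}) > 0" using idx(2)[of k] \<eta> unfolding T_def by linarith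
  qed
  then obtain jj where jj: "\<And>k. jj k \<in> S (idx k)" "\<And>k. 0 < h (idx k) (jj k) {e}"
    "\<And>k. ray_deviation X r e (h (idx k) (jj k)) \<le> \<rho> k * h (idx k) (jj k) {e}"
    by metis
  obtain c g where cg: "\<And>k. 0 \<le> c k" "\<And>k. Q X (g k)"
    "\<And>k A. A \<subseteq> X \<Longrightarrow> h (idx k) (jj k) A = c k * g k A"
    using Q[OF jj(1)] by metis
  define c' where "c' k = c k / h (idx k) (jj k) {e}" for k
  have "c k \<noteq> 0" for k using jj(2)[of k] cg(3)[of "{e}" k] e by auto
  then have "Q X (g k) \<and> c' k > 0" for k
    using cg(1,2) jj(2) unfolding c'_def by (simp add: less_le)
  moreover have "(\<lambda>k. c' k * g k A) \<longlonglongrightarrow> r A" if A: "A \<subseteq> X" for A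
    using normalized_tendsto_if_ray_deviation_vanishes[OF X A jj(2,3) \<rho>]
    unfolding c'_def using cg(3)[OF A] by simp
  ultimately show ?thesis unfolding ray_limit_def by blast
qed

lemma ray_deviation_sum_tendsto_zero:
  fixes h :: "nat \<Rightarrow> 'j \<Rightarrow> 'e set \<Rightarrow> real"
  assumes CM: "connected_matroid X r" and e: "e \<in> X"
    and poly: "\<And>i j. j \<in> J i \<Longrightarrow> polymatroid X (h i j)"
    and conv: "\<And>A. A \<subseteq> X \<Longrightarrow> (\<lambda>i. \<Sum>j\<in>J i. h i j A) \<longlonglongrightarrow> r A"
  shows "(\<lambda>i. \<Sum>j\<in>J i. ray_deviation X r e (h i j)) \<longlonglongrightarrow> 0"
proof -
  obtain K where K: "K \<ge> 0" "\<And>(J :: 'j set) h. (\<And>j. j \<in> J \<Longrightarrow> polymatroid X (h j)) \<Longrightarrow>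
       (\<Sum>j\<in>J. ray_deviation X r e (h j)) \<le> K * (\<Sum>A\<in>Pow X. \<bar>(\<Sum>j\<in>J. h j A) - r A\<bar>)"
    by (rule connected_matroid_ray_deviation_bound[OF CM e]) iprover
  define N where "N i = (\<Sum>A\<in>Pow X. \<bar>(\<Sum>j\<in>J i. h i j A) - r A\<bar>)" for i
  have "N \<longlonglongrightarrow> 0" unfolding N_def
  proof (rule tendsto_null_sum)
    fix A assume "A \<in> Pow X"
    then have "(\<lambda>i. \<bar>(\<Sum>j\<in>J i. h i j A) - r A\<bar>) \<longlonglongrightarrow> \<bar>r A - r A\<bar>"
      using conv by (intro tendsto_rabs tendsto_diff tendsto_const) auto
    then show "(\<lambda>i. \<bar>(\<Sum>j\<in>J i. h i j A) - r A\<bar>) \<longlonglongrightarrow> 0" by simp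
  qed
  then have KN: "(\<lambda>i. K * N i) \<longlonglongrightarrow> 0" by (rule tendsto_mult_right_zero)
  have le: "(\<Sum>j\<in>J i. ray_deviation X r e (h i j)) \<le> K * N i" for i
    unfolding N_def using K(2)[of "J i" "h i"] poly by simp
  have ge: "0 \<le> (\<Sum>j\<in>J i. ray_deviation X r e (h i j))" for i
    by (intro sum_nonneg ray_deviation_nonneg)
  show ?thesis
    by (rule tendsto_sandwich[OF always_eventually always_eventually tendsto_const KN])
      (use le ge in auto)
qed

text \<open>The selected members approach the ray through r, so their total mass is controlled by
  their mass at a single point e; if that did not vanish, r would be a limit of positive multiples
  of members of Q.\<close>
lemma selected_mass_tendsto_zero:
  fixes h :: "nat \<Rightarrow> 'j \<Rightarrow> 'e set \<Rightarrow> real"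
  assumes CM: "connected_matroid X r" and fin: "\<And>i. finite (J i)"
    and poly: "\<And>i j. j \<in> J i \<Longrightarrow> polymatroid X (h i j)"
    and conv: "\<And>A. A \<subseteq> X \<Longrightarrow> (\<lambda>i. \<Sum>j\<in>J i. h i j A) \<longlonglongrightarrow> r A"
    and S: "\<And>i. S i \<subseteq> J i"
    and Q: "\<And>i j. j \<in> S i \<Longrightarrow> \<exists>c g. 0 \<le> c \<and> Q X g \<and> (\<forall>A\<subseteq>X. h i j A = c * g A)"
    and not_limit: "\<not> ray_limit Q X r"
  shows "(\<lambda>i. \<Sum>j\<in>S i. h i j X) \<longlonglongrightarrow> 0"
proof (cases "X = {}")
  case True
  have "(\<Sum>j\<in>S i. h i j X) = 0" for i
    using True S polymatroidD(2)[OF poly] by (auto intro!: sum.neutral)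
  then show ?thesis by simp
next
  case False
  then obtain e where e: "e \<in> X" by blast
  have "matroid X r" using CM by (simp add: connected_matroid_def)
  then have finX: "finite X" using polymatroidD(1)[OF matroidD(1)] by blast
  have finS: "finite (S i)" for i using finite_subset[OF S fin] .
  have polyS: "polymatroid X (h i j)" if "j \<in> S i" for i j using poly S that by blast
  define \<delta> where "\<delta> i = (\<Sum>j\<in>J i. ray_deviation X r e (h i j))" for i
  have \<delta>: "\<delta> \<longlonglongrightarrow> 0"
    unfolding \<delta>_def by (rule ray_deviation_sum_tendsto_zero[OF CM e poly conv])
  have devS: "(\<Sum>j\<in>S i. ray_deviation X r e (h i j)) \<le> \<delta> i" for i
    unfolding \<delta>_def using ray_deviation_nonneg by (intro sum_mono2[OF fin S]) auto
  have nonneg: "0 \<le> h i j {e}" if "j \<in> S i" for i j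
    using polymatroidD(3)[OF polyS[OF that]] e by simp
  define T where "T i = (\<Sum>j\<in>S i. h i j {e})" for i
  have T: "T \<longlonglongrightarrow> 0"
  proof (rule ccontr)
    assume "\<not> T \<longlonglongrightarrow> 0"
    then have "ray_limit Q X r"
      using ray_limit_if_selected_mass_persists[where Q = Q, OF finX e devS \<delta> finS nonneg Q]
      unfolding T_def by simp
    then show False using not_limit by contradiction
  qed
  have "h i j X \<le> h i j {e} * r X + ray_deviation X r e (h i j)" for i j
    using abs_le_ray_deviation[OF finX subset_refl, of "h i j" e r] by linarith
  then have le: "(\<Sum>j\<in>S i. h i j X) \<le> T i * r X + \<delta> i" for i
    using sum_mono[of "S i" "\<lambda>j. h i j X" "\<lambda>j. h i j {e} * r X + ray_deviation X r e (h i j)"]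
      devS[of i] unfolding T_def by (simp add: sum.distrib sum_distrib_right)
  have ge: "0 \<le> (\<Sum>j\<in>S i. h i j X)" for i
    using polymatroidD(3)[OF polyS, of _ i X] by (simp add: sum_nonneg)
  have "(\<lambda>i. T i * r X + \<delta> i) \<longlonglongrightarrow> 0 * r X + 0"
    by (intro tendsto_add tendsto_mult T \<delta> tendsto_const)
  then have bound: "(\<lambda>i. T i * r X + \<delta> i) \<longlonglongrightarrow> 0" by simp
  show ?thesis
    by (rule tendsto_sandwich[OF always_eventually always_eventually tendsto_const bound])
      (use le ge in auto)
qed

section \<open>Limits of representable cones\<close>

lemma cc_representableE:
  fixes X :: "'e set"
  assumes "cc_representable X h"
  obtains n :: "nat \<Rightarrow> nat" and c :: "nat \<Rightarrow> nat \<Rightarrow> real" and g :: "nat \<Rightarrow> nat \<Rightarrow> 'e set \<Rightarrow> real"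
  where "\<And>i j. j < n i \<Longrightarrow> 0 \<le> c i j" "\<And>i j. j < n i \<Longrightarrow> representable X (g i j)"
    "\<And>A. A \<subseteq> X \<Longrightarrow> (\<lambda>i. \<Sum>j<n i. c i j * g i j A) \<longlonglongrightarrow> h A"
proof -
  obtain f where f: "\<And>i. f i \<in> rep_cone X" and lim: "\<And>A. A \<subseteq> X \<Longrightarrow> (\<lambda>i. f i A) \<longlonglongrightarrow> h A"
    using assms unfolding cc_representable_def by blast
  have "\<forall>i. \<exists>(n :: nat) (c :: nat \<Rightarrow> real) (g :: nat \<Rightarrow> 'e set \<Rightarrow> real).
      (\<forall>j<n. 0 \<le> c j \<and> representable X (g j)) \<and> (\<forall>A. A \<subseteq> X \<longrightarrow> f i A = (\<Sum>j<n. c j * g j A))"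
    using f unfolding rep_cone_def by blast
  then obtain n :: "nat \<Rightarrow> nat" and c :: "nat \<Rightarrow> nat \<Rightarrow> real" and g :: "nat \<Rightarrow> nat \<Rightarrow> 'e set \<Rightarrow> real"
    where cg: "\<And>i j. j < n i \<Longrightarrow> 0 \<le> c i j \<and> representable X (g i j)"
      and sum: "\<And>i A. A \<subseteq> X \<Longrightarrow> f i A = (\<Sum>j<n i. c i j * g i j A)"
    by metis
  show ?thesis
  proof (rule that)
    show "0 \<le> c i j" "representable X (g i j)" if "j < n i" for i j using cg[OF that] by auto
    show "(\<lambda>i. \<Sum>j<n i. c i j * g i j A) \<longlonglongrightarrow> h A" if "A \<subseteq> X" for A
      using lim[OF that] sum[OF that] by simp
  qed
qed

lemma cone_sum_le_split:
  fixes c :: "'j \<Rightarrow> real"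
  assumes "finite J" "\<And>j. j \<in> J \<Longrightarrow> 0 \<le> c j" "\<And>j. j \<in> J \<Longrightarrow> polymatroid X (g j)"
    and "X1 \<subseteq> X" "X2 \<subseteq> X"
  shows "(\<Sum>j\<in>J. c j * g j X1) + (\<Sum>j\<in>J. c j * g j X2) \<le>
    (\<Sum>j\<in>J. c j * g j X) + (\<Sum>j\<in>J - E. c j * g j X1) + (\<Sum>j\<in>J \<inter> E. c j * g j X2)"
proof -
  have mono: "c j * g j Y \<le> c j * g j X" if "j \<in> J" "Y \<subseteq> X" for j Y
    using polymatroidD(4)[OF assms(3)[OF that(1)] that(2) subset_refl] assms(2)[OF that(1)]
    by (rule mult_left_mono)
  have "(\<Sum>j\<in>J \<inter> E. c j * g j X1) \<le> (\<Sum>j\<in>J \<inter> E. c j * g j X)"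
    using mono assms(4) by (intro sum_mono) auto
  moreover have "(\<Sum>j\<in>J - E. c j * g j X2) \<le> (\<Sum>j\<in>J - E. c j * g j X)"
    using mono assms(5) by (intro sum_mono) auto
  ultimately show ?thesis
    using sum.Int_Diff[OF assms(1), of "\<lambda>j. c j * g j X1" E]
      sum.Int_Diff[OF assms(1), of "\<lambda>j. c j * g j X2" E]
      sum.Int_Diff[OF assms(1), of "\<lambda>j. c j * g j X" E] by linarith
qed

lemma cone_selected_mass_tendsto_zero:
  fixes g :: "nat \<Rightarrow> nat \<Rightarrow> 'e set \<Rightarrow> real"
  assumes CM: "connected_matroid Y \<Phi>" and Y: "Y \<subseteq> X" and not_limit: "\<not> ray_limit Q Y \<Phi>"
    and c: "\<And>i j. j < n i \<Longrightarrow> 0 \<le> c i j" and g: "\<And>i j. j < n i \<Longrightarrow> polymatroid X (g i j)"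
    and lim: "\<And>A. A \<subseteq> Y \<Longrightarrow> (\<lambda>i. \<Sum>j<n i. c i j * g i j A) \<longlonglongrightarrow> \<Phi> A"
    and S: "\<And>i. S i \<subseteq> {..<n i}" and Q: "\<And>i j. j \<in> S i \<Longrightarrow> Q Y (g i j)"
  shows "(\<lambda>i. \<Sum>j\<in>S i. c i j * g i j Y) \<longlonglongrightarrow> 0"
proof (rule selected_mass_tendsto_zero[OF CM finite_lessThan _ lim S _ not_limit])
  show "polymatroid Y (\<lambda>A. c i j * g i j A)" if "j \<in> {..<n i}" for i j
    using polymatroid_subset[OF polymatroid_scale[OF g c] Y] that by simp
  show "\<exists>c' g'. 0 \<le> c' \<and> Q Y g' \<and> (\<forall>A\<subseteq>Y. c i j * g i j A = c' * g' A)" if "j \<in> S i" for i j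
    using c Q that S by blast
qed

text \<open>Split the representable summands by the parity of their field. On X1 the odd summands
  must vanish in the limit, on X2 the even ones; the remaining summands see X1 and X2 through
  disjoint parts of the family, so their total rank on X is at least the sum of the two ranks.\<close>
lemma cc_representable_ge_component_ranks:
  fixes h \<Phi>1 \<Phi>2 :: "'e set \<Rightarrow> real"
  assumes cc: "cc_representable X h" and X1: "X1 \<subseteq> X" and X2: "X2 \<subseteq> X"
    and CM1: "connected_matroid X1 \<Phi>1" and not_odd: "\<not> almost_odd_representable X1 \<Phi>1"
    and h1: "\<And>A. A \<subseteq> X1 \<Longrightarrow> h A = \<Phi>1 A"
    and CM2: "connected_matroid X2 \<Phi>2" and not_even: "\<not> almost_even_representable X2 \<Phi>2"
    and h2: "\<And>A. A \<subseteq> X2 \<Longrightarrow> h A = \<Phi>2 A"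
  shows "\<Phi>1 X1 + \<Phi>2 X2 \<le> h X"
proof -
  obtain n c and g :: "nat \<Rightarrow> nat \<Rightarrow> 'e set \<Rightarrow> real"
    where c: "\<And>i j. j < n i \<Longrightarrow> 0 \<le> c i j" and g: "\<And>i j. j < n i \<Longrightarrow> representable X (g i j)"
      and lim: "\<And>A. A \<subseteq> X \<Longrightarrow> (\<lambda>i. \<Sum>j<n i. c i j * g i j A) \<longlonglongrightarrow> h A"
    by (rule cc_representableE[OF cc]) iprover
  note poly = representable_polymatroid[OF g]
  define E where "E i = {j. even_representable X (g i j)}" for i
  have odd_mass: "(\<lambda>i. \<Sum>j\<in>{..<n i} - E i. c i j * g i j X1) \<longlonglongrightarrow> 0"
  proof (rule cone_selected_mass_tendsto_zero[OF CM1 X1 _ c poly])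
    show "\<not> ray_limit odd_representable X1 \<Phi>1"
      using not_odd by (simp add: almost_odd_representable_iff_ray_limit)
    show "odd_representable X1 (g i j)" if "j \<in> {..<n i} - E i" for i j
      using that representable_even_or_odd[OF g] odd_representable_subset[OF _ X1]
      unfolding E_def by blast
    show "(\<lambda>i. \<Sum>j<n i. c i j * g i j A) \<longlonglongrightarrow> \<Phi>1 A" if "A \<subseteq> X1" for A
      using lim[of A] h1[OF that] that X1 by auto
  qed auto
  have even_mass: "(\<lambda>i. \<Sum>j\<in>{..<n i} \<inter> E i. c i j * g i j X2) \<longlonglongrightarrow> 0"
  proof (rule cone_selected_mass_tendsto_zero[OF CM2 X2 _ c poly])
    show "\<not> ray_limit even_representable X2 \<Phi>2"
      using not_even by (simp add: almost_even_representable_iff_ray_limit)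
    show "even_representable X2 (g i j)" if "j \<in> {..<n i} \<inter> E i" for i j
      using that even_representable_subset[OF _ X2] unfolding E_def by blast
    show "(\<lambda>i. \<Sum>j<n i. c i j * g i j A) \<longlonglongrightarrow> \<Phi>2 A" if "A \<subseteq> X2" for A
      using lim[of A] h2[OF that] that X2 by auto
  qed auto
  have "(\<lambda>i. (\<Sum>j<n i. c i j * g i j X1) + (\<Sum>j<n i. c i j * g i j X2)) \<longlonglongrightarrow> \<Phi>1 X1 + \<Phi>2 X2"
    using lim[OF X1] lim[OF X2] h1[OF subset_refl] h2[OF subset_refl] by (intro tendsto_add) auto
  moreover have "(\<lambda>i. (\<Sum>j<n i. c i j * g i j X) + (\<Sum>j\<in>{..<n i} - E i. c i j * g i j X1) +
      (\<Sum>j\<in>{..<n i} \<inter> E i. c i j * g i j X2)) \<longlonglongrightarrow> h X + 0 + 0"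
    using lim[OF subset_refl] odd_mass even_mass by (intro tendsto_add)
  moreover have "(\<Sum>j<n i. c i j * g i j X1) + (\<Sum>j<n i. c i j * g i j X2) \<le>
      (\<Sum>j<n i. c i j * g i j X) + (\<Sum>j\<in>{..<n i} - E i. c i j * g i j X1) +
      (\<Sum>j\<in>{..<n i} \<inter> E i. c i j * g i j X2)" for i
    by (rule cone_sum_le_split[OF finite_lessThan _ _ X1 X2]) (use c poly in auto)
  ultimately show ?thesis by (intro LIMSEQ_le) auto
qed

lemma truncated_direct_sum_component:
  assumes "polymatroid X1 \<Phi>1" "polymatroid X2 \<Phi>2" "X1 \<inter> X2 = {}" "\<epsilon> \<le> \<Phi>2 X2" "A \<subseteq> X1"
  shows "min (\<Phi>1 (A \<inter> X1) + \<Phi>2 (A \<inter> X2)) (\<Phi>1 X1 + \<Phi>2 X2 - \<epsilon>) = \<Phi>1 A"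
proof -
  have "A \<inter> X1 = A" "A \<inter> X2 = {}" using assms(3,5) by auto
  moreover have "\<Phi>1 A \<le> \<Phi>1 X1" using polymatroidD(4)[OF assms(1,5)] by simp
  ultimately show ?thesis using polymatroidD(2)[OF assms(2)] assms(4) by simp
qed

theorem theorem5:
  fixes X1 X2 :: "'e set" and \<Phi>1 \<Phi>2 :: "'e set \<Rightarrow> real" and \<epsilon> :: real
  assumes "connected_matroid X1 \<Phi>1"
    and "even_representable X1 \<Phi>1"
    and "\<not> almost_odd_representable X1 \<Phi>1"
    and "connected_matroid X2 \<Phi>2"
    and "odd_representable X2 \<Phi>2"
    and "\<not> almost_even_representable X2 \<Phi>2"
    and "X1 \<inter> X2 = {}"
    and "0 < \<epsilon>" and "\<epsilon> \<le> min (\<Phi>1 X1) (\<Phi>2 X2)"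
  shows "let X = X1 \<union> X2;
             \<Phi> = (\<lambda>A. \<Phi>1 (A \<inter> X1) + \<Phi>2 (A \<inter> X2));
             \<Phi>\<epsilon> = (\<lambda>A. min (\<Phi> A) (\<Phi> X - \<epsilon>))
         in \<not> cc_representable X \<Phi>\<epsilon>"
proof -
  have P1: "polymatroid X1 \<Phi>1" and P2: "polymatroid X2 \<Phi>2"
    using assms(1,4) by (simp_all add: connected_matroid_def matroid_def)
  define \<Phi>\<epsilon> where "\<Phi>\<epsilon> A = min (\<Phi>1 (A \<inter> X1) + \<Phi>2 (A \<inter> X2)) (\<Phi>1 X1 + \<Phi>2 X2 - \<epsilon>)" for A
  have "\<Phi>\<epsilon> A = \<Phi>1 A" if "A \<subseteq> X1" for A
    unfolding \<Phi>\<epsilon>_def using truncated_direct_sum_component[OF P1 P2 assms(7) _ that] assms(9) by simp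
  moreover have "\<Phi>\<epsilon> A = \<Phi>2 A" if "A \<subseteq> X2" for A
    unfolding \<Phi>\<epsilon>_def using truncated_direct_sum_component[OF P2 P1 _ _ that] assms(7,9)
    by (simp add: add.commute Int_commute)
  ultimately have "\<not> cc_representable (X1 \<union> X2) \<Phi>\<epsilon>"
    using cc_representable_ge_component_ranks[of "X1 \<union> X2" \<Phi>\<epsilon> X1 X2 \<Phi>1 \<Phi>2] assms(1,3,4,6,8)
    unfolding \<Phi>\<epsilon>_def[of "X1 \<union> X2"] by (auto simp: Int_absorb2)
  moreover have "(X1 \<union> X2) \<inter> X1 = X1" "(X1 \<union> X2) \<inter> X2 = X2" by auto
  ultimately show ?thesis unfolding \<Phi>\<epsilon>_def Let_def by simp
qed

end
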